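(* For any function $f^*:\mathbb R\rightarrow\mathbb R$, any (nonempty) finite set $\mathcal X\subset\mathbb R$, and any compact interval $\mathcal{I} \subset\mathbb R$ containing $\mathcal X$, there exists a $\textsc{ReLU}$ network $f:\mathbb R\rightarrow\mathbb R$ of width $2$ such that $f(x)=f^*(x)$ for all $x\in\mathcal X$ and $f(\mathcal I)\subset\big[\min f^*(\mathcal X),\max f^*(\mathcal X)\big]$.
   Context: A $\textsc{ReLU}$ network is $t_L\circ\sigma_{L-1}\circ\cdots\circ\sigma_1\circ t_1$ with affine maps $t_\ell:\mathbb R^{d_{\ell-1}}\to\mathbb R^{d_\ell}$ and $\sigma_\ell$ the coordinatewise $\textsc{ReLU}$ $x\mapsto\max\{x,0\}$; its width is $\max\{d_1,\dots,d_{L-1}\}$ and its depth is arbitrary. *)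

theory Defs
  imports "HOL-Analysis.Analysis"
begin

text \<open>Vectors in R^d are represented as functions nat => real, only indices < d matter.\<close>

record layer =
  ldin :: nat
  ldout :: nat
  lW :: "nat \<Rightarrow> nat \<Rightarrow> real"
  lb :: "nat \<Rightarrow> real"

definition affine_apply :: "layer \<Rightarrow> (nat \<Rightarrow> real) \<Rightarrow> (nat \<Rightarrow> real)" where
  "affine_apply t x = (\<lambda>i. if i < ldout t then (\<Sum>j<ldin t. lW t i j * x j) + lb t i else 0)"

definition relu_vec :: "(nat \<Rightarrow> real) \<Rightarrow> (nat \<Rightarrow> real)" where
  "relu_vec x = (\<lambda>i. max (x i) 0)"

fun net_eval :: "layer list \<Rightarrow> (nat \<Rightarrow> real) \<Rightarrow> (nat \<Rightarrow> real)" where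
  "net_eval [] x = x"
| "net_eval [t] x = affine_apply t x"
| "net_eval (t # ts) x = net_eval ts (relu_vec (affine_apply t x))"

definition valid_net :: "nat \<Rightarrow> nat \<Rightarrow> layer list \<Rightarrow> bool" where
  "valid_net d0 dL ts \<longleftrightarrow> ts \<noteq> [] \<and> ldin (hd ts) = d0 \<and> ldout (last ts) = dL \<and>
     (\<forall>k. Suc k < length ts \<longrightarrow> ldout (ts ! k) = ldin (ts ! Suc k))"

definition net_width :: "layer list \<Rightarrow> nat" where
  "net_width ts = Max (insert 0 {ldout (ts ! k) | k. Suc k < length ts})"

definition net_fun :: "layer list \<Rightarrow> real \<Rightarrow> real" where
  "net_fun ts x = net_eval ts (\<lambda>i. if i = 0 then x else 0) 0"

definition relu_net_of_width :: "nat \<Rightarrow> (real \<Rightarrow> real) \<Rightarrow> bool" where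
  "relu_net_of_width w f \<longleftrightarrow> (\<exists>ts. valid_net 1 1 ts \<and> net_width ts = w \<and> f = net_fun ts)"

end

theory Submission
  imports Defs
begin

text \<open>The first carries a ramp max(x - c, 0); the second
accumulates the interpolant. Adding the data points in increasing order, the ramp whose kink
sits at the previous largest point vanishes on all earlier points, so adding a multiple of it to
the second neuron fixes the value at the new point without disturbing the old ones; afterwards
the kink is shifted to the new point. Finally y \<mapsto> M - max(M - m - max(y, 0), 0)
clamps the accumulated value to [m, M], which gives the range bound on all of the real
line, not only on the interval.\<close>

definition hidden_state :: "layer list \<Rightarrow> real \<Rightarrow> nat \<Rightarrow> real" where
  "hidden_state ts x = relu_vec (net_eval ts (\<lambda>i. if i = 0 then x else 0))"

definition width2_body :: "layer list \<Rightarrow> bool" where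
  "width2_body ts \<longleftrightarrow> ts \<noteq> [] \<and> ldin (hd ts) = 1 \<and> (\<forall>t\<in>set ts. ldout t = 2) \<and>
     (\<forall>t\<in>set (tl ts). ldin t = 2)"

lemma hidden_state_nonneg: "0 \<le> hidden_state ts x i"
  by (simp add: hidden_state_def relu_vec_def)

lemma net_eval_Cons_nonempty:
  "ts \<noteq> [] \<Longrightarrow> net_eval (t # ts) x = net_eval ts (relu_vec (affine_apply t x))"
  by (cases ts) auto

lemma net_eval_append:
  "ts \<noteq> [] \<Longrightarrow> rs \<noteq> [] \<Longrightarrow> net_eval (ts @ rs) x = net_eval rs (relu_vec (net_eval ts x))"
proof (induction ts arbitrary: x)
  case (Cons t ts)
  then show ?case by (cases "ts = []") (simp_all add: net_eval_Cons_nonempty)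
qed simp

lemma hidden_state_snoc:
  "ts \<noteq> [] \<Longrightarrow> hidden_state (ts @ [t]) x = relu_vec (affine_apply t (hidden_state ts x))"
  by (simp add: hidden_state_def net_eval_append)

lemma net_fun_snoc:
  "ts \<noteq> [] \<Longrightarrow> net_fun (ts @ [t]) x = affine_apply t (hidden_state ts x) 0"
  by (simp add: net_fun_def hidden_state_def net_eval_append)

lemma width2_body_snoc:
  "width2_body ts \<Longrightarrow> ldin t = 2 \<Longrightarrow> ldout t = 2 \<Longrightarrow> width2_body (ts @ [t])"
  by (cases ts) (auto simp: width2_body_def)

lemma valid_net_width2_body_snoc:
  assumes "width2_body ts" and "ldin t = 2" and "ldout t = 1"
  shows "valid_net 1 1 (ts @ [t])"
proof -
  obtain t0 ts0 where ts: "ts = t0 # ts0"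
    using assms(1) by (auto simp: width2_body_def neq_Nil_conv)
  have "ldout ((ts @ [t]) ! k) = ldin ((ts @ [t]) ! Suc k)" if k: "Suc k < length (ts @ [t])" for k
  proof -
    have "ldout ((ts @ [t]) ! k) = 2"
      using k assms(1) by (simp add: width2_body_def nth_append)
    moreover have "(ts0 @ [t]) ! k \<in> set (ts0 @ [t])"
      using k ts by (intro nth_mem) simp
    then have "ldin ((ts @ [t]) ! Suc k) = 2"
      using assms(1,2) by (auto simp: width2_body_def ts simp del: nth_append)
    ultimately show ?thesis by simp
  qed
  then show ?thesis
    using assms by (simp add: valid_net_def width2_body_def)
qed

lemma net_width_width2_body_snoc:
  assumes "width2_body ts"
  shows "net_width (ts @ [t]) = 2"
proof -
  have "{ldout ((ts @ [t]) ! k) | k. Suc k < length (ts @ [t])} = ldout ` set ts"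
    by (fastforce simp: nth_append in_set_conv_nth)
  also have "\<dots> = {2}"
    using assms unfolding width2_body_def by (simp add: image_constant_conv cong: image_cong)
  finally show ?thesis by (simp add: net_width_def)
qed

lemma relu_net_of_width_width2_body_snoc:
  "width2_body ts \<Longrightarrow> ldin t = 2 \<Longrightarrow> ldout t = 1 \<Longrightarrow> relu_net_of_width 2 (net_fun (ts @ [t]))"
  using valid_net_width2_body_snoc net_width_width2_body_snoc relu_net_of_width_def by blast

definition ramp_layer :: "real \<Rightarrow> layer" where
  "ramp_layer c = \<lparr>ldin = 1, ldout = 2, lW = (\<lambda>i j. if i = 0 then 1 else 0),
     lb = (\<lambda>i. if i = 0 then - c else 0)\<rparr>"

definition shift_accumulate_layer :: "real \<Rightarrow> real \<Rightarrow> layer" where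
  "shift_accumulate_layer d \<gamma> = \<lparr>ldin = 2, ldout = 2,
     lW = (\<lambda>i j. if i = 0 then (if j = 0 then 1 else 0) else (if j = 0 then \<gamma> else 1)),
     lb = (\<lambda>i. if i = 0 then - d else 0)\<rparr>"

definition reflect_layer :: "real \<Rightarrow> layer" where
  "reflect_layer r = \<lparr>ldin = 2, ldout = 2, lW = (\<lambda>i j. if i = 1 \<and> j = 1 then -1 else 0),
     lb = (\<lambda>i. if i = 1 then r else 0)\<rparr>"

definition output_layer :: "real \<Rightarrow> layer" where
  "output_layer r = \<lparr>ldin = 2, ldout = 1, lW = (\<lambda>i j. if j = 1 then -1 else 0), lb = (\<lambda>i. r)\<rparr>"

lemma sum_lessThan_2: "(\<Sum>j<(2::nat). f j) = f 0 + (f 1 :: real)"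
  by (simp add: numeral_2_eq_2)

lemma hidden_state_ramp_layer:
  "hidden_state [ramp_layer c] x = (\<lambda>i. if i = 0 then max (x - c) 0 else 0)"
  by (auto simp: hidden_state_def ramp_layer_def affine_apply_def relu_vec_def)

lemma affine_apply_shift_accumulate_layer:
  "affine_apply (shift_accumulate_layer d \<gamma>) y =
     (\<lambda>i. if i = 0 then y 0 - d else if i = 1 then \<gamma> * y 0 + y 1 else 0)"
  by (auto simp: shift_accumulate_layer_def affine_apply_def sum_lessThan_2)

lemma affine_apply_reflect_layer:
  "affine_apply (reflect_layer r) y = (\<lambda>i. if i = 1 then r - y 1 else 0)"
  by (auto simp: reflect_layer_def affine_apply_def sum_lessThan_2)

lemma affine_apply_output_layer:
  "affine_apply (output_layer r) y = (\<lambda>i. if i = 0 then r - y 1 else 0)"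
  by (auto simp: output_layer_def affine_apply_def sum_lessThan_2)

lemma width2_body_interpolating:
  fixes g :: "real \<Rightarrow> real"
  assumes "finite A" and "\<forall>z\<in>A. z \<le> c"
  shows "\<exists>ts. width2_body ts \<and> (\<forall>x. hidden_state ts x 0 = max (x - c) 0) \<and>
           (\<forall>z\<in>A. hidden_state ts z 1 = max (g z) 0)"
  using assms
proof (induction A arbitrary: c rule: finite_linorder_max_induct)
  case empty
  have "width2_body [ramp_layer c]"
    by (simp add: width2_body_def ramp_layer_def)
  then show ?case
    by (auto simp: hidden_state_ramp_layer)
next
  case (insert b A)
  define c' where "c' = (if A = {} then b - 1 else Max A)"
  have "c' < b" and below_c': "\<forall>z\<in>A. z \<le> c'" and "c' \<le> c"
    using insert by (auto simp: c'_def)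
  obtain ts where ts: "width2_body ts" and ramp: "\<forall>x. hidden_state ts x 0 = max (x - c') 0"
    and interp: "\<forall>z\<in>A. hidden_state ts z 1 = max (g z) 0"
    using insert.IH below_c' by blast
  define \<gamma> where "\<gamma> = (max (g b) 0 - hidden_state ts b 1) / (b - c')"
  define ts' where "ts' = ts @ [shift_accumulate_layer (c - c') \<gamma>]"
  have step: "hidden_state ts' x =
      relu_vec (\<lambda>i. if i = 0 then hidden_state ts x 0 - (c - c')
                    else if i = 1 then \<gamma> * hidden_state ts x 0 + hidden_state ts x 1 else 0)" for x
    using ts by (simp add: ts'_def width2_body_def hidden_state_snoc
        affine_apply_shift_accumulate_layer)
  have "width2_body ts'"
    using ts by (simp add: ts'_def width2_body_snoc shift_accumulate_layer_def)
  moreover have "hidden_state ts' x 0 = max (x - c) 0" for x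
    using \<open>c' \<le> c\<close> by (auto simp: step ramp relu_vec_def)
  moreover have "hidden_state ts' z 1 = max (g z) 0" if "z \<in> insert b A" for z
  proof (cases "z = b")
    case True
    then show ?thesis
      using \<open>c' < b\<close> by (simp add: step ramp relu_vec_def \<gamma>_def)
  next
    case False
    then have "z \<in> A" and "max (z - c') 0 = 0"
      using that below_c' by auto
    then show ?thesis
      using interp by (simp add: step ramp relu_vec_def)
  qed
  ultimately show ?case by blast
qed

theorem lemma5:
  fixes fstar :: "real \<Rightarrow> real" and X :: "real set" and a b :: real
  assumes "finite X" and "X \<noteq> {}" and "X \<subseteq> {a..b}"
  shows "\<exists>f. relu_net_of_width 2 f \<and> (\<forall>x\<in>X. f x = fstar x) \<and>
           f ` {a..b} \<subseteq> {Min (fstar ` X) .. Max (fstar ` X)}"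
proof -
  define m where "m = Min (fstar ` X)"
  define M where "M = Max (fstar ` X)"
  have range: "m \<le> fstar z" "fstar z \<le> M" if "z \<in> X" for z
    using that assms(1) by (auto simp: m_def M_def)
  then have "m \<le> M"
    using assms(2) by fastforce
  obtain ts where ts: "width2_body ts"
    and interp: "\<forall>z\<in>X. hidden_state ts z 1 = max (fstar z - m) 0"
    using width2_body_interpolating[OF assms(1), where c = "Max X" and g = "\<lambda>z. fstar z - m"]
      assms(1) by auto
  define f where "f = net_fun (ts @ [reflect_layer (M - m), output_layer M])"
  have f_eq: "f x = M - max (M - m - hidden_state ts x 1) 0" for x
    using ts net_fun_snoc[of "ts @ [reflect_layer (M - m)]"]
    by (simp add: f_def width2_body_def hidden_state_snoc affine_apply_output_layer
        affine_apply_reflect_layer relu_vec_def hidden_state_nonneg)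
  have f_range: "f x \<in> {m..M}" for x
    using \<open>m \<le> M\<close> hidden_state_nonneg[of ts x 1] by (simp add: f_eq max_def)
  have "width2_body (ts @ [reflect_layer (M - m)])"
    using ts by (simp add: width2_body_snoc reflect_layer_def)
  from relu_net_of_width_width2_body_snoc[OF this, of "output_layer M"]
  have "relu_net_of_width 2 f"
    by (simp add: f_def output_layer_def)
  moreover have "\<forall>x\<in>X. f x = fstar x"
    using interp range by (simp add: f_eq)
  moreover have "f ` {a..b} \<subseteq> {m..M}"
    using f_range by blast
  ultimately show ?thesis
    unfolding m_def M_def by blast
qed

end
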